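(* Let $f$ be analytic on $\mathbb{D}$ and suppose there is a constant $c\ge 0$ with $\operatorname{Diam} f(r\mathbb{D})=cr$ for all $0<r<1$. Then $f(z)=a+bz$ for some constants $a,b\in\mathbb{C}$.
   Context: $\mathbb{D}$ is the open unit disk, $r\mathbb{D}=\{|z|<r\}$; for a set $E\subset\mathbb{C}$, $\operatorname{Diam}E=\sup_{z,w\in E}|z-w|$. *)

theory Defs
  imports "HOL-Complex_Analysis.Complex_Analysis" "HOL-Library.Extended_Real"
begin

definition Diam :: "complex set \<Rightarrow> ereal" where
  "Diam E = (SUP z\<in>E. SUP w\<in>E. ereal (cmod (z - w)))"

end

theory Submission
  imports Defs
begin

(* The diameter condition gives |f z - f w| <= c max(|z|, |w|). For |p|, |q| <= 1 the Schwarz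
   lemma, applied to the chord map s \<mapsto> f(sp) - f(sq), yields |f'(0)(p - q)| <= c, and any
   equality case forces f(sp) - f(sq) = f'(0)(p - q)s. A pair of points realising the diameter
   c/2 of f(D/2) is such an equality case, whence c = 2|f'(0)|; then every diametral chord is
   extremal and f(z) - f(-z) = 2f'(0)z. So on the circle |w| = |p| the distance |f(-p) - f(w)|
   is maximal at w = p, and its vanishing tangential derivative there says that
   conj(f'(0)) f'(p) is real. By the open mapping theorem this holomorphic function is
   constant, so f' is constant and f is affine. *)

lemma dist_le_Diam:
  assumes "x \<in> E" "y \<in> E"
  shows "ereal (cmod (x - y)) \<le> Diam E"
  using assms unfolding Diam_def by (meson SUP_upper order_trans)

lemma Diam_le:
  assumes "\<And>x y. x \<in> E \<Longrightarrow> y \<in> E \<Longrightarrow> cmod (x - y) \<le> M"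
  shows "Diam E \<le> ereal M"
  using assms unfolding Diam_def by (intro SUP_least) auto

lemma norm_diff_le_of_Diam_ball:
  fixes f :: "complex \<Rightarrow> complex"
  assumes Diam: "\<And>r. 0 < r \<Longrightarrow> r < 1 \<Longrightarrow> Diam (f ` ball 0 r) \<le> ereal (c * r)"
    and "z \<in> ball 0 1" "w \<in> ball 0 1"
  shows "cmod (f z - f w) \<le> c * max (cmod z) (cmod w)"
proof -
  define m where "m = max (cmod z) (cmod w)"
  have m: "0 \<le> m" "m < 1"
    using assms(2,3) by (auto simp: m_def le_max_iff_disj)
  have "cmod (f z - f w) \<le> c * r" if "m < r" "r < 1" for r
  proof -
    have "z \<in> ball 0 r" "w \<in> ball 0 r"
      using that by (auto simp: m_def)
    then have "ereal (cmod (f z - f w)) \<le> Diam (f ` ball 0 r)"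
      by (intro dist_le_Diam imageI)
    also have "\<dots> \<le> ereal (c * r)"
      using Diam that m by auto
    finally show ?thesis by simp
  qed
  then have "eventually (\<lambda>r. cmod (f z - f w) \<le> c * r) (at_right m)"
    unfolding eventually_at_right_field using m by (intro exI[of _ 1]) auto
  with tendsto_mult_left[OF tendsto_ident_at] have "cmod (f z - f w) \<le> c * m"
    by (rule tendsto_lowerbound) simp
  then show ?thesis by (simp add: m_def)
qed

lemma continuous_attains_max_dist:
  fixes f :: "'a::topological_space \<Rightarrow> 'b::metric_space"
  assumes "compact K" "K \<noteq> {}" "continuous_on K f"
  obtains z w where "z \<in> K" "w \<in> K"
    "\<And>x y. x \<in> K \<Longrightarrow> y \<in> K \<Longrightarrow> dist (f x) (f y) \<le> dist (f z) (f w)"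
proof -
  have "continuous_on (K \<times> K) (\<lambda>x. dist (f (fst x)) (f (snd x)))"
    using assms(3) by (intro continuous_intros continuous_on_compose2[OF assms(3)]) auto
  moreover have "compact (K \<times> K)" "K \<times> K \<noteq> {}"
    using assms(1,2) by (auto simp: compact_Times)
  ultimately obtain x0 where "x0 \<in> K \<times> K"
    "\<And>y. y \<in> K \<times> K \<Longrightarrow> dist (f (fst y)) (f (snd y)) \<le> dist (f (fst x0)) (f (snd x0))"
    using continuous_attains_sup[of "K \<times> K"] by blast
  then show ?thesis
    using that[of "fst x0" "snd x0"] by (auto simp: mem_Times_iff)
qed

lemma Schwarz_Lemma_scaled:
  fixes g :: "complex \<Rightarrow> complex"
  assumes holg: "g holomorphic_on ball 0 1" and g0: "g 0 = 0" and c: "c > 0"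
    and le: "\<And>s. cmod s < 1 \<Longrightarrow> cmod (g s) \<le> c * cmod s"
  shows "cmod (deriv g 0) \<le> c"
    and "(\<exists>t. cmod t < 1 \<and> t \<noteq> 0 \<and> cmod (g t) = c * cmod t) \<or> cmod (deriv g 0) = c
         \<Longrightarrow> cmod s < 1 \<Longrightarrow> g s = deriv g 0 * s"
proof -
  define h where "h = (\<lambda>s. g s / c)"
  have holh: "h holomorphic_on ball 0 1"
    unfolding h_def using holg by (intro holomorphic_intros) auto
  have h_le: "cmod (h s) \<le> cmod s" if "cmod s < 1" for s
    using le[OF that] c by (simp add: h_def norm_divide field_simps)
  have h_lt: "cmod (h s) < 1" if "cmod s < 1" for s
    using h_le[OF that] that by linarith
  have "h 0 = 0"
    by (simp add: h_def g0)
  note Schwarz = Schwarz_Lemma[OF holh this h_lt, of 0]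
  have "g field_differentiable at 0"
    using holg by (rule holomorphic_on_imp_differentiable_at) auto
  then have dh: "deriv h 0 = deriv g 0 / c"
    unfolding h_def by (rule deriv_cdivide_right)
  show "cmod (deriv g 0) \<le> c"
    using Schwarz(2) c unfolding dh by (simp add: norm_divide field_simps)
  assume "(\<exists>t. cmod t < 1 \<and> t \<noteq> 0 \<and> cmod (g t) = c * cmod t) \<or> cmod (deriv g 0) = c"
  then have "(\<exists>t. cmod t < 1 \<and> t \<noteq> 0 \<and> cmod (h t) = cmod t) \<or> cmod (deriv h 0) = 1"
    unfolding dh using c by (auto simp: h_def norm_divide)
  then obtain \<alpha> where "\<And>t. cmod t < 1 \<Longrightarrow> h t = \<alpha> * t"
    using Schwarz(3) by auto
  then have g_eq: "\<And>t. t \<in> ball 0 1 \<Longrightarrow> g t = c * \<alpha> * t"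
    using c by (simp add: h_def field_simps)
  have "deriv g 0 = deriv (\<lambda>t. c * \<alpha> * t) 0"
    by (intro deriv_cong_ev eventually_mono[OF eventually_nhds_in_open[of "ball 0 1"] g_eq]) auto
  then have "deriv g 0 = c * \<alpha>"
    by simp
  moreover assume "cmod s < 1"
  ultimately show "g s = deriv g 0 * s"
    using g_eq by simp
qed

lemma holomorphic_chord:
  fixes f :: "complex \<Rightarrow> complex"
  assumes holf: "f holomorphic_on ball 0 1" and "cmod p \<le> 1" "cmod q \<le> 1"
  shows "(\<lambda>s. f (s * p) - f (s * q)) holomorphic_on ball 0 1"
proof -
  have "(\<lambda>s. f (s * x)) holomorphic_on ball 0 1" if "cmod x \<le> 1" for x
  proof -
    have "s * x \<in> ball 0 1" if "s \<in> ball 0 1" for s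
      using that \<open>cmod x \<le> 1\<close> mult_left_le[of "cmod x" "cmod s"]
      by (simp add: norm_mult)
    then have "(f \<circ> (\<lambda>s. s * x)) holomorphic_on ball 0 1"
      by (intro holomorphic_on_compose_gen[OF _ holf]) (auto intro: holomorphic_intros)
    then show ?thesis by (simp add: o_def)
  qed
  then show ?thesis
    using assms by (intro holomorphic_intros) auto
qed

lemma deriv_chord:
  fixes f :: "complex \<Rightarrow> complex"
  assumes "f field_differentiable at 0"
  shows "deriv (\<lambda>s. f (s * p) - f (s * q)) 0 = deriv f 0 * (p - q)"
proof -
  have "((\<lambda>s. f (s * x)) has_field_derivative deriv f 0 * x) (at 0)" for x
  proof (rule DERIV_chain2[where g="\<lambda>s. s * x" and x=0 and s=UNIV])
    show "(f has_field_derivative deriv f 0) (at (0 * x))"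
      using field_differentiable_derivI[OF assms] by simp
  qed (auto intro!: derivative_eq_intros)
  then have "((\<lambda>s. f (s * p) - f (s * q)) has_field_derivative deriv f 0 * p - deriv f 0 * q) (at 0)"
    by (intro DERIV_diff)
  then show ?thesis
    by (simp add: DERIV_imp_deriv right_diff_distrib)
qed

lemma Im_deriv_at_circle_max:
  fixes f :: "complex \<Rightarrow> complex"
  assumes "f field_differentiable at w"
    and max: "\<And>t::real. cmod (v - f (w * exp (\<i> * t))) \<le> cmod (v - f w)"
  shows "Im (cnj (v - f w) * deriv f w * w) = 0"
proof -
  define A where "A = v - f w"
  define \<phi> where "\<phi> = (\<lambda>z. cnj A * (v - f (w * exp (\<i> * z))))"
  define D where "D = cnj A * (- (deriv f w * (w * \<i>)))"
  have "((\<lambda>z. f (w * exp (\<i> * z))) has_field_derivative deriv f w * (w * \<i>)) (at 0)"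
  proof (rule DERIV_chain2[where g="\<lambda>z. w * exp (\<i> * z)" and x=0 and s=UNIV])
    show "(f has_field_derivative deriv f w) (at (w * exp (\<i> * 0)))"
      using field_differentiable_derivI[OF assms(1)] by simp
  qed (auto intro!: derivative_eq_intros)
  then have "(\<phi> has_field_derivative D) (at (of_real 0))"
    unfolding \<phi>_def D_def by (auto intro!: derivative_eq_intros)
  then have "((\<lambda>t::real. Re (\<phi> (of_real t))) has_field_derivative Re D) (at 0)"
    by (intro has_field_derivative_Re has_vector_derivative_real_field)
  moreover have "Re (\<phi> (of_real t)) \<le> Re (\<phi> (of_real 0))" for t
  proof -
    have "Re (\<phi> (of_real t)) \<le> cmod A * cmod (v - f (w * exp (\<i> * t)))"
      unfolding \<phi>_def by (metis complex_Re_le_cmod complex_mod_cnj norm_mult)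
    also have "\<dots> \<le> cmod A ^ 2"
      using max by (simp add: A_def power2_eq_square mult_left_mono)
    also have "\<dots> = Re (\<phi> (of_real 0))"
      by (simp add: \<phi>_def A_def[symmetric] mult.commute[of "cnj A"] flip: complex_norm_square)
    finally show ?thesis .
  qed
  ultimately have "Re D = 0"
    by (intro DERIV_local_max[of _ _ 0 1]) auto
  then show ?thesis
    by (simp add: D_def A_def algebra_simps)
qed

lemma holomorphic_real_valued_imp_constant:
  assumes holf: "f holomorphic_on S" and S: "open S" "connected S"
    and real: "\<And>z. z \<in> S \<Longrightarrow> f z \<in> \<real>"
  shows "f constant_on S"
proof (rule ccontr)
  assume nonconst: "\<not> f constant_on S"
  then obtain z where z: "z \<in> S"
    unfolding constant_on_def by blast
  have "open (f ` S)"
    using open_mapping_thm[OF holf S S(1) order_refl nonconst] .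
  then obtain e where e: "e > 0" "ball (f z) e \<subseteq> f ` S"
    using z unfolding open_contains_ball by blast
  have "f z + \<i> * of_real (e / 2) \<in> ball (f z) e"
    using e by (simp add: dist_norm norm_mult)
  then obtain u where "u \<in> S" "f u = f z + \<i> * of_real (e / 2)"
    using e(2) by (metis imageE subsetD)
  then have "f z + \<i> * of_real (e / 2) \<in> \<real>"
    using real by metis
  moreover have "f z \<in> \<real>"
    using real z .
  ultimately show False
    using e(1) by (simp add: complex_is_Real_iff)
qed

lemma affine_if_deriv_eq_const:
  fixes f :: "complex \<Rightarrow> complex"
  assumes holf: "f holomorphic_on S" and S: "open S" "convex S"
    and deriv: "\<And>z. z \<in> S \<Longrightarrow> deriv f z = b"
  shows "\<exists>a. \<forall>z\<in>S. f z = a + b * z"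
proof -
  have "\<exists>a. \<forall>z\<in>S. f z - b * z = a"
  proof (rule has_field_derivative_zero_constant[OF S(2)])
    fix z assume "z \<in> S"
    then have "(f has_field_derivative b) (at z within S)"
      using holomorphic_derivI[OF holf S(1)] deriv by metis
    then show "((\<lambda>z. f z - b * z) has_field_derivative 0) (at z within S)"
      by (auto intro!: derivative_eq_intros)
  qed
  then show ?thesis
    by (simp add: diff_eq_eq add.commute)
qed

locale linear_Diam_growth =
  fixes f :: "complex \<Rightarrow> complex" and c :: real
  assumes holo: "f holomorphic_on ball 0 1"
    and pos: "c > 0"
    and Diam_ball: "\<And>r. 0 < r \<Longrightarrow> r < 1 \<Longrightarrow> Diam (f ` ball 0 r) = ereal (c * r)"
begin

lemma chord_le:
  assumes "z \<in> ball 0 1" "w \<in> ball 0 1"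
  shows "cmod (f z - f w) \<le> c * max (cmod z) (cmod w)"
  using norm_diff_le_of_Diam_ball[of f c z w] Diam_ball assms by simp

lemma chord_Schwarz:
  assumes p: "cmod p \<le> 1" and q: "cmod q \<le> 1"
  shows "cmod (deriv f 0 * (p - q)) \<le> c"
    and "(\<exists>t. cmod t < 1 \<and> t \<noteq> 0 \<and> cmod (f (t * p) - f (t * q)) = c * cmod t)
           \<or> cmod (deriv f 0 * (p - q)) = c
         \<Longrightarrow> cmod s < 1 \<Longrightarrow> f (s * p) - f (s * q) = deriv f 0 * (p - q) * s"
proof -
  let ?g = "\<lambda>s. f (s * p) - f (s * q)"
  have "f field_differentiable at 0"
    using holo by (rule holomorphic_on_imp_differentiable_at) auto
  then have deriv_g: "deriv ?g 0 = deriv f 0 * (p - q)"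
    by (rule deriv_chord)
  have "cmod (?g s) \<le> c * cmod s" if "cmod s < 1" for s
  proof -
    have "max (cmod (s * p)) (cmod (s * q)) \<le> cmod s"
      using p q by (simp add: norm_mult mult_left_le)
    moreover have "s * p \<in> ball 0 1" "s * q \<in> ball 0 1"
      using that p q mult_left_le[of "cmod p" "cmod s"] mult_left_le[of "cmod q" "cmod s"]
      by (auto simp: norm_mult)
    ultimately show ?thesis
      using chord_le pos by (meson mult_left_mono less_imp_le order_trans)
  qed
  note Schwarz = Schwarz_Lemma_scaled[OF holomorphic_chord[OF holo p q] _ pos this,
      unfolded deriv_g, simplified]
  show "cmod (deriv f 0 * (p - q)) \<le> c"
    by (rule Schwarz(1))
  show "f (s * p) - f (s * q) = deriv f 0 * (p - q) * s"
    if "(\<exists>t. cmod t < 1 \<and> t \<noteq> 0 \<and> cmod (f (t * p) - f (t * q)) = c * cmod t)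
          \<or> cmod (deriv f 0 * (p - q)) = c" "cmod s < 1"
    using Schwarz(2) that by blast
qed

lemma Diam_half_ball_attained:
  obtains z w where "cmod z \<le> 1/2" "cmod w \<le> 1/2" "cmod (f z - f w) = c / 2"
proof -
  let ?K = "cball (0::complex) (1/2)"
  have "continuous_on ?K f"
    using holomorphic_on_imp_continuous_on[OF holo] by (rule continuous_on_subset) auto
  then obtain z w where zw: "z \<in> ?K" "w \<in> ?K"
    and max: "\<And>x y. x \<in> ?K \<Longrightarrow> y \<in> ?K \<Longrightarrow> dist (f x) (f y) \<le> dist (f z) (f w)"
    using continuous_attains_max_dist[of ?K f] by auto
  have "ereal (c / 2) = Diam (f ` ball 0 (1/2))"
    using Diam_ball[of "1/2"] by simp
  also have "\<dots> \<le> ereal (cmod (f z - f w))"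
    using max by (intro Diam_le) (auto simp: dist_norm)
  finally have "c / 2 \<le> cmod (f z - f w)"
    by simp
  moreover have "cmod (f z - f w) \<le> c * max (cmod z) (cmod w)"
    using zw by (intro chord_le) auto
  moreover have "c * max (cmod z) (cmod w) \<le> c / 2"
    using zw pos by (auto simp: max_def)
  ultimately show ?thesis
    using that zw by auto
qed

lemma c_eq_twice_norm_deriv: "c = 2 * cmod (deriv f 0)"
proof -
  have lower: "2 * cmod (deriv f 0) \<le> c"
    using chord_Schwarz(1)[of 1 "-1"] by (simp add: norm_mult)
  obtain z w where zw: "cmod z \<le> 1/2" "cmod w \<le> 1/2" and extremal: "cmod (f z - f w) = c / 2"
    by (rule Diam_half_ball_attained)
  have "f ((1/2) * (2 * z)) - f ((1/2) * (2 * w)) = deriv f 0 * (2 * z - 2 * w) * (1/2)"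
    using extremal zw by (intro chord_Schwarz(2)) (auto simp: norm_mult intro!: exI[of _ "1/2"])
  then have "f z - f w = deriv f 0 * (z - w)"
    by (simp add: algebra_simps)
  then have "c / 2 = cmod (deriv f 0) * cmod (z - w)"
    using extremal by (simp add: norm_mult)
  also have "\<dots> \<le> cmod (deriv f 0) * (cmod z + cmod w)"
    by (intro mult_left_mono norm_triangle_ineq4) simp
  also have "\<dots> \<le> cmod (deriv f 0)"
    using zw mult_left_mono[of "cmod z + cmod w" 1 "cmod (deriv f 0)"] by simp
  finally show ?thesis
    using lower by simp
qed

lemma odd_part_eq:
  assumes "z \<in> ball 0 1"
  shows "f z - f (-z) = 2 * deriv f 0 * z"
proof (cases "z = 0")
  case False
  define u where "u = z / of_real (cmod z)"
  have u: "cmod u = 1" and z: "of_real (cmod z) * u = z" "of_real (cmod z) * - u = -z"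
    using False by (simp_all add: u_def norm_divide)
  have "cmod (deriv f 0 * (u - - u)) = c"
    using u c_eq_twice_norm_deriv by (simp add: norm_mult)
  then have "f z - f (-z) = deriv f 0 * (u - - u) * of_real (cmod z)"
    using chord_Schwarz(2)[of u "-u" "of_real (cmod z)", unfolded z] u assms by auto
  also have "\<dots> = 2 * deriv f 0 * (of_real (cmod z) * u)"
    by (simp add: algebra_simps)
  finally show ?thesis
    unfolding z .
qed simp

lemma Im_cnj_deriv_eq_0:
  assumes w: "w \<in> ball 0 1"
  shows "Im (cnj (deriv f 0) * deriv f w) = 0"
proof (cases "w = 0")
  case False
  have diff: "f (-w) - f w = - (2 * deriv f 0 * w)"
    using odd_part_eq[of "-w"] w by simp
  have "f field_differentiable at w"
    using holomorphic_on_imp_differentiable_at[OF holo _ w] by simp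
  moreover have "cmod (f (-w) - f (w * exp (\<i> * t))) \<le> cmod (f (-w) - f w)" for t :: real
  proof -
    have "cmod (w * exp (\<i> * t)) = cmod w"
      by (simp add: norm_mult)
    then have "cmod (f (-w) - f (w * exp (\<i> * t))) \<le> c * cmod w"
      using chord_le[of "-w" "w * exp (\<i> * t)"] w by simp
    also have "\<dots> = cmod (f (-w) - f w)"
      by (simp add: diff c_eq_twice_norm_deriv norm_mult)
    finally show ?thesis .
  qed
  ultimately have "Im (cnj (f (-w) - f w) * deriv f w * w) = 0"
    by (rule Im_deriv_at_circle_max)
  moreover have "cnj (f (-w) - f w) * deriv f w * w
      = of_real (- 2 * cmod w ^ 2) * (cnj (deriv f 0) * deriv f w)"
    by (simp add: diff complex_norm_square[unfolded of_real_power] algebra_simps)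
  ultimately have "Im (of_real (- 2 * cmod w ^ 2) * (cnj (deriv f 0) * deriv f w)) = 0"
    by metis
  then show ?thesis
    using False by simp
qed (simp add: mult.commute)

end

theorem corollary4:
  fixes f :: "complex \<Rightarrow> complex" and c :: real
  assumes "f holomorphic_on ball 0 1"
    and "c \<ge> 0"
    and "\<And>r. 0 < r \<Longrightarrow> r < 1 \<Longrightarrow> Diam (f ` ball 0 r) = ereal (c * r)"
  shows "\<exists>a b. \<forall>z\<in>ball 0 1. f z = a + b * z"
proof (cases "c = 0")
  case True
  have "f z = f 0 + 0 * z" if "z \<in> ball 0 1" for z
    using norm_diff_le_of_Diam_ball[of f c z 0] assms(3) that True by simp
  then show ?thesis
    by blast
next
  case False
  with assms interpret linear_Diam_growth f c
    by unfold_locales auto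
  define a where "a = deriv f 0"
  have "(\<lambda>w. cnj a * deriv f w) constant_on ball 0 1"
    using Im_cnj_deriv_eq_0 unfolding a_def
    by (intro holomorphic_real_valued_imp_constant holomorphic_intros holomorphic_deriv holo)
      (auto simp: complex_is_Real_iff)
  then obtain k where k: "\<And>w. w \<in> ball 0 1 \<Longrightarrow> cnj a * deriv f w = k"
    by (auto simp: constant_on_def)
  have "a \<noteq> 0"
    using c_eq_twice_norm_deriv pos by (auto simp: a_def)
  then have "deriv f w = k / cnj a" if "w \<in> ball 0 1" for w
    using k[OF that] by (simp add: field_simps)
  then have "\<exists>a0. \<forall>z\<in>ball 0 1. f z = a0 + k / cnj a * z"
    by (intro affine_if_deriv_eq_const[OF holo]) auto
  then show ?thesis
    by blast
qed

end
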